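(* For all $n,m,k\in\mathbb{N}$, \[ \sum_{i=0}^{k}\frac{1}{\binom{n}{i}}=\frac{2^{m}(n+1)}{n+m+1}\sum_{i=0}^{k}\frac{1}{\binom{n+m}{i}}+\sum_{j=1}^{m}\frac{2^{j-1}(n+1)}{n+j+1}\left(\frac{1}{\binom{n+j}{k+1}}-1\right), \] where $k\le n$ so that all binomial coefficients in denominators are nonzero.
   Context: Empty sums are $0$. *)

theory Defs
  imports Complex_Main
begin

end

theory Submission
  imports Defs
begin

text \<open>Both binomial coefficients of row \<open>n + 1\<close> are rational multiples of \<open>n choose i\<close>,
  namely \<open>(n + 1) / (n + 1 - i)\<close> and \<open>(n + 1) / (i + 1)\<close> times it; the two reciprocal
  weights add up to \<open>(n + 2) / (n + 1)\<close>. Summing this identity over \<open>i \<le> k\<close> telescopes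
  into a relation between the partial sums of rows \<open>n\<close> and \<open>n + 1\<close>, and iterating that
  relation \<open>m\<close> times gives the theorem.\<close>

lemma inverse_binomial_Suc_pair:
  fixes n i :: nat
  assumes "i \<le> n"
  shows "1 / real (Suc n choose i) + 1 / real (Suc n choose Suc i)
           = real (n + 2) / (real (n + 1) * real (n choose i))"
proof -
  have pos: "real (n choose i) > 0" using assms by simp
  have left: "real (Suc n - i) * real (Suc n choose i) = real (Suc n) * real (n choose i)"
    using binomial_absorb_comp[of "Suc n" i] by (metis diff_Suc_1 of_nat_mult)
  have right: "real (Suc i) * real (Suc n choose Suc i) = real (Suc n) * real (n choose i)"
    using Suc_times_binomial[of i n] by (metis of_nat_mult)
  have pos1: "real (Suc n choose i) > 0" and pos2: "real (Suc n choose Suc i) > 0"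
    using assms by (simp_all del: binomial_Suc_Suc)
  have denom: "real (n + 1) * real (n choose i) \<noteq> 0" using pos by simp
  have "1 / real (Suc n choose i) = real (Suc n - i) / (real (n + 1) * real (n choose i))"
    using left pos1 denom by (simp add: divide_simps del: of_nat_mult)
  moreover have "1 / real (Suc n choose Suc i) = real (Suc i) / (real (n + 1) * real (n choose i))"
    using right pos2 denom by (simp add: divide_simps del: of_nat_mult binomial_Suc_Suc)
  moreover have "real (Suc n - i) + real (Suc i) = real (n + 2)"
    using assms by (simp add: of_nat_diff)
  ultimately show ?thesis by (simp add: add_divide_distrib[symmetric])
qed

lemma sum_inverse_binomial_Suc:
  fixes n k :: nat
  assumes "k \<le> n"
  shows "(\<Sum>i=0..k. 1 / real (n choose i))
           = (2 * real (n + 1) / real (n + 2)) * (\<Sum>i=0..k. 1 / real (Suc n choose i))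
             + (real (n + 1) / real (n + 2)) * (1 / real (Suc n choose Suc k) - 1)"
proof -
  define c where "c = real (n + 1) / real (n + 2)"
  have summand: "1 / real (n choose i)
                   = c * (1 / real (Suc n choose i) + 1 / real (Suc n choose Suc i))" if "i \<le> k" for i
  proof -
    have "real (n choose i) > 0" using that assms by simp
    then show ?thesis
      unfolding inverse_binomial_Suc_pair[OF order_trans[OF that assms]] c_def by simp
  qed
  have shift: "(\<Sum>i=0..k. 1 / real (Suc n choose Suc i))
                 = (\<Sum>i=0..k. 1 / real (Suc n choose i)) - 1 + 1 / real (Suc n choose Suc k)"
    using sum.atLeast0_atMost_Suc_shift[of "\<lambda>i. 1 / real (Suc n choose i)" k]
    by (simp add: sum.atLeast0_atMost_Suc del: binomial_Suc_Suc)
  have "(\<Sum>i=0..k. 1 / real (n choose i))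
          = c * ((\<Sum>i=0..k. 1 / real (Suc n choose i)) + (\<Sum>i=0..k. 1 / real (Suc n choose Suc i)))"
    unfolding sum.distrib[symmetric] sum_distrib_left by (rule sum.cong) (simp_all add: summand)
  also have "\<dots> = 2 * c * (\<Sum>i=0..k. 1 / real (Suc n choose i))
                   + c * (1 / real (Suc n choose Suc k) - 1)"
    unfolding shift by (simp add: algebra_simps)
  finally show ?thesis by (simp add: c_def)
qed

theorem mainTheorem17:
  fixes n m k :: nat
  assumes "k \<le> n"
  shows "(\<Sum>i=0..k. 1 / real (n choose i)) =
    (2 ^ m * real (n + 1) / real (n + m + 1)) * (\<Sum>i=0..k. 1 / real ((n + m) choose i))
    + (\<Sum>j=1..m. (2 ^ (j - 1) * real (n + 1) / real (n + j + 1)) * (1 / real ((n + j) choose (k + 1)) - 1))"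
proof (induction m)
  case 0
  then show ?case by simp
next
  case (Suc m)
  define A where "A = 2 ^ m * real (n + 1) / real (n + m + 1)"
  define c where "c = real (n + m + 1) / real (n + m + 2)"
  define S where "S = (\<Sum>i=0..k. 1 / real ((n + Suc m) choose i))"
  define D where "D = 1 / real ((n + Suc m) choose (k + 1)) - 1"
  define R where "R = (\<Sum>j=1..m. (2 ^ (j - 1) * real (n + 1) / real (n + j + 1))
                                    * (1 / real ((n + j) choose (k + 1)) - 1))"
  have "(\<Sum>i=0..k. 1 / real ((n + m) choose i)) = 2 * c * S + c * D"
    using sum_inverse_binomial_Suc[of k "n + m"] assms by (simp add: c_def S_def D_def)
  with Suc.IH have "(\<Sum>i=0..k. 1 / real (n choose i)) = (2 * A * c) * S + (R + (A * c) * D)"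
    unfolding A_def[symmetric] R_def[symmetric] by (simp add: algebra_simps)
  moreover have "2 * A * c = 2 ^ Suc m * real (n + 1) / real (n + Suc m + 1)"
    and "A * c = 2 ^ (Suc m - 1) * real (n + 1) / real (n + Suc m + 1)"
    unfolding A_def c_def by (simp_all add: divide_simps del: of_nat_add)
  ultimately show ?case by (simp add: S_def D_def R_def)
qed

end
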